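(* Let $V$ be a vector configuration with $\operatorname{codeg}^*(V)\ge1$. Then there is a totally cyclic subconfiguration $W\subseteq V$ with $\operatorname{codeg}^*(W)=\operatorname{codeg}^*(V)$.
   Context: A vector configuration is a finite family (repetitions allowed) of vectors in $\mathbb{R}^r$; a subconfiguration is a subfamily; cardinalities count multiplicities. A configuration $W$ is totally cyclic if there exist real numbers $\lambda_w>0$, $w\in W$, with $\sum_{w\in W}\lambda_w w=0$. For a nonzero linear functional $f$ on $\mathbb{R}^r$ let $H=\{f=0\}$, $\overline{H}^-=\{f\le0\}$. The dual codegree is $\operatorname{codeg}^*(X)=\min_H|\overline{H}^-\cap X|$, the minimum over all such oriented linear hyperplanes $H$. *)

theory Defs
  imports "HOL-Analysis.Analysis"
begin

text \<open>A vector configuration in R^r is modelled as a finite index set I together with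
  a map v from indices to vectors (repetitions allowed); a subconfiguration is given
  by a subset of the index set; cardinalities count indices.\<close>

definition totally_cyclic :: "'i set \<Rightarrow> ('i \<Rightarrow> real^'n) \<Rightarrow> bool" where
  "totally_cyclic I v \<longleftrightarrow>
     (\<exists>c::'i \<Rightarrow> real. (\<forall>i\<in>I. c i > 0) \<and> (\<Sum>i\<in>I. c i *\<^sub>R v i) = 0)"

definition codeg_star :: "'i set \<Rightarrow> ('i \<Rightarrow> real^'n) \<Rightarrow> nat" where
  "codeg_star I v =
     Min {card {i\<in>I. f (v i) \<le> 0} | f :: real^'n \<Rightarrow> real. linear f \<and> f \<noteq> (\<lambda>x. 0)}"

end

theory Submission
  imports Defs
begin

text \<open>If V is not totally cyclic, then by Gordan's alternative (a separation argument against
  the finitely generated cone spanned by V) some linear functional a is nonnegative on V and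
  positive on some vector v_j. Removing v_j does not change the dual codegree: an optimal
  hyperplane f for V without v_j is tilted to f + t a with t large, which keeps every vector
  with a > 0 on the positive side, v_j included. Iterating until the configuration is totally
  cyclic gives W.\<close>

lemma convex_cone_hull_image_nonneg_combination:
  fixes v :: "'i \<Rightarrow> 'a::real_vector"
  assumes "finite I" and "x \<in> convex_cone hull (v ` I)"
  shows "\<exists>c. (\<forall>i\<in>I. 0 \<le> c i) \<and> x = (\<Sum>i\<in>I. c i *\<^sub>R v i)"
proof -
  let ?S = "{x. \<exists>c. (\<forall>i\<in>I. 0 \<le> c i) \<and> x = (\<Sum>i\<in>I. c i *\<^sub>R v i)}"
  have "v ` I \<subseteq> ?S"
  proof
    fix x assume "x \<in> v ` I"
    then obtain k where k: "k \<in> I" "x = v k" by auto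
    have "(\<Sum>i\<in>I. (if i = k then 1 else 0) *\<^sub>R v i) = (\<Sum>i\<in>I. if i = k then v i else 0)"
      by (intro sum.cong) auto
    also have "\<dots> = v k"
      using k assms(1) by simp
    finally have "(\<Sum>i\<in>I. (if i = k then 1 else 0) *\<^sub>R v i) = v k" .
    then show "x \<in> ?S"
      using k by (intro CollectI exI[of _ "\<lambda>i. if i = k then 1 else 0"]) auto
  qed
  moreover have "convex_cone ?S"
    unfolding convex_cone_iff
  proof (intro conjI ballI allI impI)
    show "0 \<in> ?S" by (intro CollectI exI[of _ "\<lambda>i. 0"]) auto
  next
    fix x y assume "x \<in> ?S" "y \<in> ?S"
    then obtain c d where "\<forall>i\<in>I. 0 \<le> c i" "x = (\<Sum>i\<in>I. c i *\<^sub>R v i)"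
      "\<forall>i\<in>I. 0 \<le> d i" "y = (\<Sum>i\<in>I. d i *\<^sub>R v i)" by auto
    then show "x + y \<in> ?S"
      by (intro CollectI exI[of _ "\<lambda>i. c i + d i"]) (auto simp: scaleR_add_left sum.distrib)
  next
    fix x and t :: real assume "x \<in> ?S" "0 \<le> t"
    then obtain c where "\<forall>i\<in>I. 0 \<le> c i" "x = (\<Sum>i\<in>I. c i *\<^sub>R v i)" by auto
    then show "t *\<^sub>R x \<in> ?S"
      using \<open>0 \<le> t\<close> by (intro CollectI exI[of _ "\<lambda>i. t * c i"]) (auto simp: scaleR_sum_right)
  qed
  ultimately have "convex_cone hull (v ` I) \<subseteq> ?S"
    by (rule hull_minimal)
  then show ?thesis using assms(2) by blast
qed

lemma separating_functional_finite_cone: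
  fixes S :: "'a::euclidean_space set"
  assumes "finite S" and "x \<notin> convex_cone hull S"
  shows "\<exists>a. (\<forall>y\<in>S. 0 \<le> inner a y) \<and> inner a x < 0"
proof -
  let ?H = "convex_cone hull S"
  obtain a b where ab: "inner a x < b" "\<forall>y\<in>?H. b < inner a y"
    using separating_hyperplane_closed_point[OF convex_convex_cone_hull
        closed_convex_cone_hull[OF assms(1)] assms(2)] by blast
  have "b < 0" using ab(2) convex_cone_hull_contains_0 by fastforce
  have "\<forall>y\<in>S. 0 \<le> inner a y"
  proof (rule ballI, rule ccontr)
    fix y assume "y \<in> S"
    assume neg: "\<not> 0 \<le> inner a y"
    define t where "t = b / inner a y"
    have "0 \<le> t" using neg \<open>b < 0\<close> unfolding t_def by (simp add: divide_nonpos_neg)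
    moreover have "y \<in> ?H" using \<open>y \<in> S\<close> by (rule hull_inc)
    ultimately have "t *\<^sub>R y \<in> ?H"
      using convex_cone_convex_cone_hull convex_cone_scaleR by blast
    then have "b < inner a (t *\<^sub>R y)" using ab(2) by blast
    moreover have "inner a (t *\<^sub>R y) = b" using neg unfolding t_def by simp
    ultimately show False by simp
  qed
  moreover have "inner a x < 0" using ab(1) \<open>b < 0\<close> by linarith
  ultimately show ?thesis by blast
qed

lemma totally_cyclic_if_negations_in_cone:
  fixes v :: "'i \<Rightarrow> real^'n"
  assumes "finite I" and "\<forall>j\<in>I. - v j \<in> convex_cone hull (v ` I)"
  shows "totally_cyclic I v"
proof -
  have "\<forall>j\<in>I. \<exists>c. (\<forall>i\<in>I. 0 \<le> c i) \<and> - v j = (\<Sum>i\<in>I. c i *\<^sub>R v i)"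
    using assms(2) convex_cone_hull_image_nonneg_combination[OF assms(1), where v=v] by blast
  then obtain C where C: "\<And>j. j \<in> I \<Longrightarrow> (\<forall>i\<in>I. 0 \<le> C j i) \<and> - v j = (\<Sum>i\<in>I. C j i *\<^sub>R v i)"
    by metis
  define d where "d i = 1 + (\<Sum>j\<in>I. C j i)" for i
  have "(\<Sum>i\<in>I. d i *\<^sub>R v i) = (\<Sum>i\<in>I. v i) + (\<Sum>i\<in>I. \<Sum>j\<in>I. C j i *\<^sub>R v i)"
    unfolding d_def by (simp add: scaleR_add_left sum.distrib scaleR_sum_left)
  also have "(\<Sum>i\<in>I. \<Sum>j\<in>I. C j i *\<^sub>R v i) = (\<Sum>j\<in>I. \<Sum>i\<in>I. C j i *\<^sub>R v i)"
    by (rule sum.swap)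
  also have "\<dots> = (\<Sum>j\<in>I. - v j)"
    using C by (intro sum.cong) auto
  finally have "(\<Sum>i\<in>I. d i *\<^sub>R v i) = 0" by (simp add: sum_negf)
  moreover
  have "d i > 0" if "i \<in> I" for i
  proof -
    have "0 \<le> (\<Sum>j\<in>I. C j i)" using C that by (intro sum_nonneg) auto
    then show ?thesis unfolding d_def by simp
  qed
  ultimately show ?thesis unfolding totally_cyclic_def by blast
qed

lemma gordan_not_totally_cyclic:
  fixes v :: "'i \<Rightarrow> real^'n"
  assumes "finite I" and "\<not> totally_cyclic I v"
  shows "\<exists>a. (\<forall>i\<in>I. 0 \<le> inner a (v i)) \<and> (\<exists>j\<in>I. 0 < inner a (v j))"
proof -
  obtain j where "j \<in> I" "- v j \<notin> convex_cone hull (v ` I)"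
    using totally_cyclic_if_negations_in_cone[OF assms(1)] assms(2) by blast
  moreover obtain a where "\<forall>y\<in>v ` I. 0 \<le> inner a y" "inner a (- v j) < 0"
    using separating_functional_finite_cone[of "v ` I"] assms(1) calculation(2) by blast
  ultimately show ?thesis by auto
qed

lemma codeg_star_le:
  fixes v :: "'i \<Rightarrow> real^'n" and f :: "real^'n \<Rightarrow> real"
  assumes "finite I" and "linear f" and "f \<noteq> (\<lambda>x. 0)"
  shows "codeg_star I v \<le> card {i\<in>I. f (v i) \<le> 0}"
  unfolding codeg_star_def
proof (rule Min_le)
  show "finite {card {i\<in>I. f (v i) \<le> 0} | f :: real^'n \<Rightarrow> real. linear f \<and> f \<noteq> (\<lambda>x. 0)}"
    by (rule finite_subset[of _ "{..card I}"]) (auto intro!: card_mono assms(1))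
qed (use assms in blast)

lemma codeg_star_attained:
  fixes v :: "'i \<Rightarrow> real^'n"
  assumes "finite I"
  obtains f :: "real^'n \<Rightarrow> real" where "linear f" "f \<noteq> (\<lambda>x. 0)" "codeg_star I v = card {i\<in>I. f (v i) \<le> 0}"
proof -
  let ?C = "{card {i\<in>I. f (v i) \<le> 0} | f :: real^'n \<Rightarrow> real. linear f \<and> f \<noteq> (\<lambda>x. 0)}"
  obtain k :: 'n where True by simp
  have "linear (\<lambda>x::real^'n. x $ k)" by (simp add: linearI)
  moreover have "(\<lambda>x::real^'n. x $ k) \<noteq> (\<lambda>x. 0)"
    by (metis axis_nth zero_neq_one)
  ultimately have "?C \<noteq> {}" by blast
  moreover have "finite ?C"
    by (rule finite_subset[of _ "{..card I}"]) (auto intro!: card_mono assms)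
  ultimately have "codeg_star I v \<in> ?C"
    unfolding codeg_star_def by (rule Min_in[rotated])
  then show ?thesis using that by blast
qed

lemma codeg_star_mono:
  fixes v :: "'i \<Rightarrow> real^'n"
  assumes "finite I" and "J \<subseteq> I"
  shows "codeg_star J v \<le> codeg_star I v"
proof -
  obtain f :: "real^'n \<Rightarrow> real" where f: "linear f" "f \<noteq> (\<lambda>x. 0)" "codeg_star I v = card {i\<in>I. f (v i) \<le> 0}"
    by (rule codeg_star_attained[OF assms(1)])
  have "codeg_star J v \<le> card {i\<in>J. f (v i) \<le> 0}"
    using codeg_star_le[OF finite_subset[OF assms(2,1)] f(1,2)] .
  also have "\<dots> \<le> card {i\<in>I. f (v i) \<le> 0}"
    using assms by (intro card_mono) auto
  finally show ?thesis using f(3) by simp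
qed

lemma exists_tilt_positive:
  fixes g a :: "'b \<Rightarrow> real"
  assumes "finite I"
  shows "\<exists>t. \<forall>i\<in>I. 0 < a i \<longrightarrow> 0 < g i + t * a i"
proof -
  let ?P = "{i\<in>I. 0 < a i}"
  define t where "t = 1 + (\<Sum>i\<in>?P. \<bar>g i\<bar> / a i)"
  have "0 < g i + t * a i" if "i \<in> I" "0 < a i" for i
  proof -
    have "\<bar>g i\<bar> / a i \<le> (\<Sum>i\<in>?P. \<bar>g i\<bar> / a i)"
      using assms that by (intro member_le_sum) auto
    then have "\<bar>g i\<bar> < t * a i"
      using that(2) unfolding t_def by (simp add: divide_le_eq algebra_simps)
    then show ?thesis by linarith
  qed
  then show ?thesis by blast
qed

lemma codeg_star_Diff_positive:
  fixes v :: "'i \<Rightarrow> real^'n"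
  assumes "finite I" and "j \<in> I"
    and "\<forall>i\<in>I. 0 \<le> inner a (v i)" and "0 < inner a (v j)"
  shows "codeg_star (I - {j}) v = codeg_star I v"
proof (rule antisym)
  show "codeg_star (I - {j}) v \<le> codeg_star I v"
    using codeg_star_mono[OF assms(1)] by blast
next
  obtain g :: "real^'n \<Rightarrow> real" where g: "linear g" "g \<noteq> (\<lambda>x. 0)"
    "codeg_star (I - {j}) v = card {i\<in>I - {j}. g (v i) \<le> 0}"
    using assms(1) by (rule codeg_star_attained[OF finite_Diff])
  obtain t where t: "\<forall>i\<in>I. 0 < inner a (v i) \<longrightarrow> 0 < g (v i) + t * inner a (v i)"
    using exists_tilt_positive[OF assms(1), of "\<lambda>i. inner a (v i)" "\<lambda>i. g (v i)"] by blast
  define h where "h x = g x + t * inner a x" for x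
  have "linear (\<lambda>x. t * inner a x)"
    by (rule linearI) (auto simp: inner_add_right algebra_simps)
  then have "linear h"
    unfolding h_def by (rule linear_compose_add[OF g(1)])
  moreover have "h \<noteq> (\<lambda>x. 0)"
  proof -
    have "0 < h (v j)" using t assms(2,4) unfolding h_def by blast
    then show ?thesis by auto
  qed
  ultimately have "codeg_star I v \<le> card {i\<in>I. h (v i) \<le> 0}"
    by (rule codeg_star_le[OF assms(1)])
  also have "\<dots> \<le> card {i\<in>I - {j}. g (v i) \<le> 0}"
  proof (rule card_mono)
    show "finite {i\<in>I - {j}. g (v i) \<le> 0}" using assms(1) by simp
    show "{i\<in>I. h (v i) \<le> 0} \<subseteq> {i\<in>I - {j}. g (v i) \<le> 0}"
    proof
      fix i assume i: "i \<in> {i\<in>I. h (v i) \<le> 0}"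
      then have "\<not> 0 < inner a (v i)" using t unfolding h_def by auto
      moreover have "0 \<le> inner a (v i)" using i assms(3) by simp
      ultimately have "inner a (v i) = 0" by linarith
      then show "i \<in> {i\<in>I - {j}. g (v i) \<le> 0}" using i assms(4) unfolding h_def by auto
    qed
  qed
  finally show "codeg_star I v \<le> codeg_star (I - {j}) v" using g(3) by simp
qed

theorem mainTheorem19:
  fixes I :: "'i set" and v :: "'i \<Rightarrow> real^'n"
  assumes "finite I"
    and "codeg_star I v \<ge> 1"
  shows "\<exists>J\<subseteq>I. totally_cyclic J v \<and> codeg_star J v = codeg_star I v"
  using assms(1)
proof (induction "card I" arbitrary: I rule: less_induct)
  case less
  show ?case
  proof (cases "totally_cyclic I v")
    case False
    then obtain a j where a: "\<forall>i\<in>I. 0 \<le> inner a (v i)" "j \<in> I" "0 < inner a (v j)"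
      using gordan_not_totally_cyclic[OF less.prems] by blast
    have "card (I - {j}) < card I"
      using less.prems a(2) by (rule card_Diff1_less)
    then obtain J where "J \<subseteq> I - {j}" "totally_cyclic J v" "codeg_star J v = codeg_star (I - {j}) v"
      using less.hyps less.prems by blast
    with codeg_star_Diff_positive[OF less.prems a(2,1,3)] show ?thesis by auto
  qed blast
qed

end
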